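(* Let $X$ be a real linear space, $T$ an infinite index set, and $f, f_t : X \to \overline{\mathbb{R}} := \mathbb{R}\cup\{\pm\infty\}$ ($t \in T$) convex proper functions. Let $h:=\sup_{t\in T} f_t$, $\Delta_1 := \operatorname{dom} f\cap\operatorname{dom} h$, and $$\sup(D_1) := \sup_{s\ge0}\inf_{x\in\Delta_1}\big(f(x)+s\,h(x)\big).$$ Let $v_1:\mathbb{R}\to\overline{\mathbb{R}}$, $v_1(r):=\inf\{f(x): h(x)\le r\}$, and let $\overline{v}_1$ be its lower semicontinuous hull, so $\overline{v}_1(0)=\min\{v_1(0),\liminf_{r\to0}v_1(r)\}$. Assume that either $\overline{v}_1(0)\neq+\infty$ or $\sup(D_1)\ne-\infty$. Then $$\sup(D_1) = \lim_{\varepsilon\downarrow0}\inf\{f(x): f_t(x)\le\varepsilon \text{ for all } t\in T\}.$$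
   Context: $\operatorname{dom} g := \{x : g(x)<+\infty\}$; a proper function never takes the value $-\infty$ and has nonempty domain. Conventions: $\inf\emptyset=+\infty$, $\sup\emptyset=-\infty$. The limit on the right exists in $\overline{\mathbb{R}}$ since the infimum is non-increasing in $\varepsilon$. *)

theory Defs
  imports "HOL-Analysis.Analysis"
begin

definition edom :: "('a \<Rightarrow> ereal) \<Rightarrow> 'a set" where
  "edom g = {x. g x < \<infinity>}"

definition proper_fun :: "('a \<Rightarrow> ereal) \<Rightarrow> bool" where
  "proper_fun g \<longleftrightarrow> (\<forall>x. g x \<noteq> -\<infinity>) \<and> edom g \<noteq> {}"

definition ereal_convex :: "('a::real_vector \<Rightarrow> ereal) \<Rightarrow> bool" where
  "ereal_convex g \<longleftrightarrow> convex {(x, r::real). g x \<le> ereal r}"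

definition v1 :: "('a \<Rightarrow> ereal) \<Rightarrow> ('a \<Rightarrow> ereal) \<Rightarrow> real \<Rightarrow> ereal" where
  "v1 f h r = (INF x\<in>{x. h x \<le> ereal r}. f x)"

definition v1bar0 :: "('a \<Rightarrow> ereal) \<Rightarrow> ('a \<Rightarrow> ereal) \<Rightarrow> ereal" where
  "v1bar0 f h = min (v1 f h 0) (Liminf (at (0::real)) (v1 f h))"

definition supD1 :: "('a \<Rightarrow> ereal) \<Rightarrow> ('a \<Rightarrow> ereal) \<Rightarrow> ereal" where
  "supD1 f h = (SUP s\<in>{0::real..}. INF x\<in>edom f \<inter> edom h. f x + ereal s * h x)"

end

theory Submission
  imports Defs
begin

text \<open>Everything is governed by the perturbation function \<open>v\<^sub>1\<close>: it is convex and antitone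
on the real line, the \<open>\<epsilon>\<close>-relaxed infima are exactly its values \<open>v\<^sub>1(\<epsilon>)\<close>, so the
right-hand side is its right limit \<open>L\<close> at 0, and for \<open>s \<ge> 0\<close> the infimum of \<open>f + s h\<close> over
\<open>\<Delta>\<^sub>1\<close> equals \<open>inf\<^sub>r (v\<^sub>1(r) + s r)\<close>. Weak duality \<open>sup(D\<^sub>1) \<le> L\<close> is then immediate.
For \<open>L\<close> finite, pick \<open>e > 0\<close> with \<open>v\<^sub>1(e)\<close> close to \<open>L\<close>; by convexity the line through
\<open>(0, L)\<close> and \<open>(e, v\<^sub>1(e))\<close> minorizes \<open>v\<^sub>1\<close> up to that error, and its slope is a dual
multiplier. For \<open>L = \<infinity>\<close> the hypothesis supplies one multiplier with finite dual value, and
adding steep slopes to it drives the dual value to \<open>\<infinity>\<close>.\<close>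

lemma ereal_convexD:
  fixes g :: "'a::real_vector \<Rightarrow> ereal"
  assumes "ereal_convex g" "g x \<le> ereal a" "g y \<le> ereal b" "0 \<le> u" "u \<le> 1"
  shows "g (u *\<^sub>R x + (1 - u) *\<^sub>R y) \<le> ereal (u * a + (1 - u) * b)"
proof -
  have "u *\<^sub>R (x, a) + (1 - u) *\<^sub>R (y, b) \<in> {(x, r). g x \<le> ereal r}"
    using assms unfolding ereal_convex_def by (intro convexD) auto
  then show ?thesis by simp
qed

lemma ereal_convexI:
  fixes g :: "'a::real_vector \<Rightarrow> ereal"
  assumes "\<And>x y a b u. g x \<le> ereal a \<Longrightarrow> g y \<le> ereal b \<Longrightarrow> 0 \<le> u \<Longrightarrow> u \<le> 1 \<Longrightarrow>
             g (u *\<^sub>R x + (1 - u) *\<^sub>R y) \<le> ereal (u * a + (1 - u) * b)"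
  shows "ereal_convex g"
  unfolding ereal_convex_def convex_alt
  using assms by (fastforce simp: add.commute)

lemma ereal_convex_SUP:
  assumes "\<And>t. t \<in> T \<Longrightarrow> ereal_convex (g t)"
  shows "ereal_convex (\<lambda>x. SUP t\<in>T. g t x)"
proof -
  have "{(x, r). (SUP t\<in>T. g t x) \<le> ereal r} = (\<Inter>t\<in>T. {(x, r). g t x \<le> ereal r})"
    by (auto simp: SUP_le_iff)
  then show ?thesis
    using assms unfolding ereal_convex_def by (auto intro: convex_INT)
qed

lemma antimono_v1: "antimono (v1 f h)"
  unfolding antimono_def v1_def by (auto intro!: INF_superset_mono intro: order_trans)

lemma ereal_convex_v1:
  assumes f: "ereal_convex f" and h: "ereal_convex h"
  shows "ereal_convex (v1 f h)"
proof (rule ereal_convexI)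
  fix r1 r2 a1 a2 u :: real
  assume a1: "v1 f h r1 \<le> ereal a1" and a2: "v1 f h r2 \<le> ereal a2" and u: "0 \<le> u" "u \<le> 1"
  show "v1 f h (u *\<^sub>R r1 + (1 - u) *\<^sub>R r2) \<le> ereal (u * a1 + (1 - u) * a2)"
  proof (rule ereal_le_epsilon2)
    fix \<delta> :: real assume "0 < \<delta>"
    then have "v1 f h r1 < ereal (a1 + \<delta>)" "v1 f h r2 < ereal (a2 + \<delta>)"
      using a1 a2 by (auto intro: le_less_trans)
    then obtain x1 x2 where x1: "h x1 \<le> ereal r1" "f x1 < ereal (a1 + \<delta>)"
      and x2: "h x2 \<le> ereal r2" "f x2 < ereal (a2 + \<delta>)"
      unfolding v1_def INF_less_iff by auto
    let ?x = "u *\<^sub>R x1 + (1 - u) *\<^sub>R x2"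
    have "h ?x \<le> ereal (u * r1 + (1 - u) * r2)"
      using ereal_convexD[OF h x1(1) x2(1) u] .
    then have "v1 f h (u *\<^sub>R r1 + (1 - u) *\<^sub>R r2) \<le> f ?x"
      unfolding v1_def by (intro INF_lower) simp
    also have "\<dots> \<le> ereal (u * (a1 + \<delta>) + (1 - u) * (a2 + \<delta>))"
      using ereal_convexD[OF f _ _ u] x1(2) x2(2) by (simp add: less_imp_le)
    also have "\<dots> = ereal (u * a1 + (1 - u) * a2) + ereal \<delta>"
      by (simp add: algebra_simps)
    finally show "v1 f h (u *\<^sub>R r1 + (1 - u) *\<^sub>R r2) \<le> ereal (u * a1 + (1 - u) * a2) + ereal \<delta>" .
  qed
qed

lemma INF_edom_eq_INF_v1:
  fixes f h :: "'a \<Rightarrow> ereal"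
  assumes h: "\<And>x. h x \<noteq> -\<infinity>" and s: "0 \<le> s"
  shows "(INF x\<in>edom f \<inter> edom h. f x + ereal s * h x) = (INF r. v1 f h r + ereal (s * r))"
    (is "?I = _")
proof (rule antisym)
  show "?I \<le> (INF r. v1 f h r + ereal (s * r))"
  proof (rule INF_greatest)
    fix r :: real
    have "?I - ereal (s * r) \<le> v1 f h r"
      unfolding v1_def
    proof (rule INF_greatest)
      fix x assume "x \<in> {x. h x \<le> ereal r}"
      then obtain q where q: "h x = ereal q" "q \<le> r"
        using h[of x] by (cases "h x") auto
      show "?I - ereal (s * r) \<le> f x"
      proof (cases "f x = \<infinity>")
        case False
        then have "x \<in> edom f \<inter> edom h" using q by (simp add: edom_def top.not_eq_extremum)
        then have "?I \<le> f x + ereal s * h x" by (rule INF_lower)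
        also have "\<dots> \<le> f x + ereal (s * r)"
          using q s by (intro add_left_mono) (simp add: mult_left_mono)
        finally show ?thesis by (simp add: ereal_minus_le_iff add.commute)
      qed simp
    qed
    then show "?I \<le> v1 f h r + ereal (s * r)"
      by (simp add: ereal_minus_le_iff add.commute)
  qed
next
  show "(INF r. v1 f h r + ereal (s * r)) \<le> ?I"
  proof (rule INF_greatest)
    fix x assume "x \<in> edom f \<inter> edom h"
    then obtain r where r: "h x = ereal r"
      using h[of x] by (cases "h x") (auto simp: edom_def)
    have "v1 f h r \<le> f x"
      unfolding v1_def using r by (intro INF_lower) simp
    then have "(INF r. v1 f h r + ereal (s * r)) \<le> f x + ereal (s * r)"
      by (intro INF_lower2[of r]) (auto intro: add_right_mono)
    then show "(INF r. v1 f h r + ereal (s * r)) \<le> f x + ereal s * h x"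
      using r by simp
  qed
qed

lemma tendsto_at_right_SUP_antimono:
  fixes v :: "real \<Rightarrow> 'b::{complete_linorder, linorder_topology}"
  assumes "antimono v"
  shows "(v \<longlongrightarrow> (SUP e\<in>{a<..}. v e)) (at_right a)"
  unfolding order_tendsto_iff
proof safe
  fix l assume "l < (SUP e\<in>{a<..}. v e)"
  then obtain e where e: "a < e" "l < v e" by (auto simp: less_SUP_iff)
  then show "\<forall>\<^sub>F x in at_right a. l < v x"
    unfolding eventually_at_right[OF e(1)]
    using e by (auto intro!: exI[of _ e] intro: less_le_trans[OF _ antimonoD[OF assms]])
next
  fix u assume "(SUP e\<in>{a<..}. v e) < u"
  then show "\<forall>\<^sub>F x in at_right a. v x < u"
    unfolding eventually_at_right[OF less_add_one[of a]]
    by (auto intro!: exI[of _ "a + 1"] intro: le_less_trans[OF SUP_upper])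
qed

lemma SUP_at_right_le_Liminf_antimono:
  fixes v :: "real \<Rightarrow> 'b::{complete_linorder, linorder_topology}"
  assumes "antimono v"
  shows "(SUP e\<in>{a<..}. v e) \<le> Liminf (at a) v"
  unfolding le_Liminf_iff
proof safe
  fix y assume "y < (SUP e\<in>{a<..}. v e)"
  then obtain e where e: "a < e" "y < v e" by (auto simp: less_SUP_iff)
  show "\<forall>\<^sub>F x in at a. y < v x"
    unfolding eventually_at
  proof (intro exI[of _ "e - a"] conjI ballI impI)
    fix x :: real assume "x \<noteq> a \<and> dist x a < e - a"
    then have "x \<le> e" by (auto simp: dist_real_def)
    then show "y < v x" using e(2) by (auto intro: less_le_trans[OF _ antimonoD[OF assms]])
  qed (use e in auto)
qed

lemma ereal_le_add_real:
  fixes x :: ereal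
  assumes "\<And>a. x \<le> ereal a \<Longrightarrow> b \<le> a + c"
  shows "ereal b \<le> x + ereal c"
proof (cases x)
  case MInf
  with assms[of "b - c - 1"] show ?thesis by simp
qed (use assms in auto)

definition dual_value :: "(real \<Rightarrow> ereal) \<Rightarrow> ereal" where
  "dual_value v = (SUP s\<in>{0::real..}. INF r. v r + ereal (s * r))"

lemma dual_value_le_SUP_at_right: "dual_value v \<le> (SUP e\<in>{0<..}. v e)"
  unfolding dual_value_def
proof (rule SUP_least)
  fix s :: real assume "s \<in> {0..}"
  then have s: "0 \<le> s" by simp
  show "(INF r. v r + ereal (s * r)) \<le> (SUP e\<in>{0<..}. v e)"
  proof (rule ereal_le_epsilon2)
    fix d :: real assume d: "0 < d"
    define e where "e = d / (s + 1)"
    have e: "0 < e" "s * e \<le> d"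
      using s d by (auto simp: e_def field_simps)
    have "(INF r. v r + ereal (s * r)) \<le> v e + ereal (s * e)"
      by (rule INF_lower) simp
    also have "\<dots> \<le> (SUP e\<in>{0<..}. v e) + ereal d"
      using e by (intro add_mono SUP_upper) auto
    finally show "(INF r. v r + ereal (s * r)) \<le> (SUP e\<in>{0<..}. v e) + ereal d" .
  qed
qed

lemma convex_antimono_affine_minorant:
  fixes v :: "real \<Rightarrow> ereal"
  assumes conv: "ereal_convex v" and anti: "antimono v"
    and l: "(SUP t\<in>{0<..}. v t) = ereal l"
    and e: "0 < e" and w: "v e = ereal w" "l - d < w"
    and a: "v r \<le> ereal a"
  shows "l - d \<le> a + (l - w) / e * r"
proof -
  have below_l: "v t \<le> ereal l" if "0 < t" for t
    using l that by (metis SUP_upper greaterThan_iff)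
  have above_l: "ereal l \<le> v 0"
    unfolding l[symmetric] by (rule SUP_least) (auto intro: antimonoD[OF anti])
  have "w \<le> l" using below_l[OF e] w by simp
  consider "r < 0" | "0 \<le> r" "r \<le> e" | "e < r" by linarith
  then show ?thesis
  proof cases
    case 1
    define u where "u = e / (e - r)"
    have u: "0 \<le> u" "u \<le> 1" "u *\<^sub>R r + (1 - u) *\<^sub>R e = 0"
      using 1 e by (auto simp: u_def field_simps)
    have "v 0 \<le> ereal (u * a + (1 - u) * w)"
      using ereal_convexD[OF conv a _ u(1,2), of e w] u(3) w by simp
    then have "l \<le> u * a + (1 - u) * w"
      using above_l by (metis ereal_less_eq(3) order_trans)
    then have "(e - r) * l \<le> (e - r) * (u * a + (1 - u) * w)"
      using 1 e by (intro mult_left_mono) auto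
    also have "\<dots> = ((e - r) * u) * a + ((e - r) - (e - r) * u) * w"
      by (simp add: algebra_simps)
    also have "\<dots> = e * a - r * w"
      using 1 e by (simp add: u_def)
    finally have "l \<le> a + (l - w) / e * r"
      using e by (simp add: field_simps)
    then show ?thesis using \<open>w \<le> l\<close> w(2) by linarith
  next
    case 2
    have "ereal w \<le> ereal a" using antimonoD[OF anti 2(2)] w a by (metis order_trans)
    moreover have "0 \<le> (l - w) / e * r" using \<open>w \<le> l\<close> e 2 by simp
    ultimately show ?thesis using w(2) by simp
  next
    case 3
    \<comment> \<open>\<open>v 0\<close> may exceed \<open>l\<close>, so take chords from \<open>t \<rightarrow> 0\<^sup>+\<close> instead of from 0\<close>
    let ?u = "\<lambda>t. (e - t) / (r - t)"
    have chord: "w \<le> ?u t * a + (1 - ?u t) * l" if t: "0 < t" "t < e" for t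
    proof -
      define u where "u = ?u t"
      have "u * (r - t) = e - t"
        using 3 t by (simp add: u_def)
      then have "u *\<^sub>R r + (1 - u) *\<^sub>R t = e"
        by (simp add: algebra_simps)
      moreover have "0 \<le> u" "u \<le> 1"
        using 3 t by (auto simp: u_def)
      ultimately show ?thesis
        using ereal_convexD[OF conv a below_l[OF t(1)], of u] w by (simp add: u_def)
    qed
    have "((\<lambda>t. ?u t * a + (1 - ?u t) * l) \<longlongrightarrow> e / r * a + (1 - e / r) * l) (at_right 0)"
      using 3 e by (intro tendsto_eq_intros) auto
    then have "w \<le> e / r * a + (1 - e / r) * l"
      by (rule tendsto_lowerbound)
         (use e chord in \<open>auto simp: eventually_at_right[OF e]\<close>)
    then have "l \<le> a + (l - w) / e * r"
      using 3 e by (simp add: field_simps)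
    then show ?thesis using \<open>w \<le> l\<close> w(2) by linarith
  qed
qed

lemma INF_le_dual_value:
  assumes "0 \<le> s"
  shows "(INF r. v r + ereal (s * r)) \<le> dual_value v"
  unfolding dual_value_def using assms by (intro SUP_upper) auto

lemma real_SUP_at_right_le_dual_value:
  fixes v :: "real \<Rightarrow> ereal"
  assumes conv: "ereal_convex v" and anti: "antimono v"
    and l: "(SUP t\<in>{0<..}. v t) = ereal l"
  shows "ereal l \<le> dual_value v"
proof (rule ereal_le_epsilon2)
  fix d :: real assume "0 < d"
  then have "ereal (l - d) < (SUP t\<in>{0<..}. v t)" using l by simp
  then obtain e where e: "0 < e" "ereal (l - d) < v e" by (auto simp: less_SUP_iff)
  have "v e \<le> ereal l" using l e(1) by (metis SUP_upper greaterThan_iff)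
  then obtain w where w: "v e = ereal w" using e(2) by (cases "v e") auto
  have "w \<le> l" "l - d < w" using w e(2) \<open>v e \<le> ereal l\<close> by auto
  define s where "s = (l - w) / e"
  have "ereal (l - d) \<le> v r + ereal (s * r)" for r
    using convex_antimono_affine_minorant[OF conv anti l e(1) w \<open>l - d < w\<close>]
    by (intro ereal_le_add_real) (simp add: s_def)
  then have "ereal (l - d) \<le> (INF r. v r + ereal (s * r))" by (rule INF_greatest)
  also have "\<dots> \<le> dual_value v"
    using \<open>w \<le> l\<close> e(1) by (intro INF_le_dual_value) (simp add: s_def)
  finally show "ereal l \<le> dual_value v + ereal d"
    by (metis add_right_mono diff_add_cancel plus_ereal.simps(1))
qed

lemma dual_value_eq_infinity:
  fixes v :: "real \<Rightarrow> ereal"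
  assumes anti: "antimono v" and top: "(SUP t\<in>{0<..}. v t) = \<infinity>"
    and "dual_value v \<noteq> -\<infinity>"
  shows "dual_value v = \<infinity>"
proof -
  obtain s0 where s0: "0 \<le> s0" "(INF r. v r + ereal (s0 * r)) \<noteq> -\<infinity>"
    using assms(3) unfolding dual_value_def bot_ereal_def[symmetric] SUP_bot_conv by auto
  let ?I = "INF r. v r + ereal (s0 * r)"
  obtain c where c: "ereal c \<le> v r + ereal (s0 * r)" for r
  proof
    fix r
    have "ereal (real_of_ereal ?I) \<le> ?I" using s0(2) by (cases ?I) auto
    also have "?I \<le> v r + ereal (s0 * r)" by (rule INF_lower) simp
    finally show "ereal (real_of_ereal ?I) \<le> v r + ereal (s0 * r)" .
  qed
  show ?thesis
  proof (rule ereal_top)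
    fix M :: real
    have "ereal M < (SUP t\<in>{0<..}. v t)" using top by simp
    then obtain e where e: "0 < e" "ereal M < v e" by (auto simp: less_SUP_iff)
    define s where "s = s0 + \<bar>M - c\<bar> / e"
    have "ereal M \<le> v r + ereal (s * r)" for r
    proof (rule ereal_le_add_real)
      fix a assume a: "v r \<le> ereal a"
      consider "r \<le> 0" | "0 < r" "r \<le> e" | "e < r" by linarith
      then show "M \<le> a + s * r"
      proof cases
        case 1
        have "\<infinity> \<le> v 0"
          unfolding top[symmetric] by (rule SUP_least) (auto intro: antimonoD[OF anti])
        then show ?thesis using antimonoD[OF anti 1] a by simp
      next
        case 2
        have "ereal M < ereal a"
          using e(2) antimonoD[OF anti 2(2)] a by (metis less_le_trans order_trans)
        then show ?thesis using 2 e(1) s0(1) by (simp add: s_def add_increasing2)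
      next
        case 3
        have "c \<le> a + s0 * r"
          using order_trans[OF c add_right_mono[OF a]] by simp
        moreover have "\<bar>M - c\<bar> \<le> \<bar>M - c\<bar> / e * r"
          using 3 e(1) by (simp add: field_simps mult_right_mono)
        ultimately show ?thesis by (simp add: s_def algebra_simps)
      qed
    qed
    then have "ereal M \<le> (INF r. v r + ereal (s * r))" by (rule INF_greatest)
    also have "\<dots> \<le> dual_value v"
      using s0(1) e(1) by (intro INF_le_dual_value) (simp add: s_def)
    finally show "ereal M \<le> dual_value v" .
  qed
qed

lemma dual_value_eq_SUP_at_right:
  fixes v :: "real \<Rightarrow> ereal"
  assumes conv: "ereal_convex v" and anti: "antimono v"
    and "(SUP t\<in>{0<..}. v t) \<noteq> \<infinity> \<or> dual_value v \<noteq> -\<infinity>"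
  shows "dual_value v = (SUP t\<in>{0<..}. v t)"
proof (rule antisym[OF dual_value_le_SUP_at_right])
  show "(SUP t\<in>{0<..}. v t) \<le> dual_value v"
  proof (cases "SUP t\<in>{0<..}. v t")
    case (real l)
    then show ?thesis using real_SUP_at_right_le_dual_value[OF conv anti] by simp
  next
    case PInf
    then show ?thesis using dual_value_eq_infinity[OF anti] assms(3) by simp
  qed simp
qed

theorem proposition3p1:
  fixes f :: "'a::real_vector \<Rightarrow> ereal"
    and ft :: "'i \<Rightarrow> 'a \<Rightarrow> ereal"
    and T :: "'i set"
    and h :: "'a \<Rightarrow> ereal"
  assumes "infinite T"
    and "ereal_convex f" and "proper_fun f"
    and "\<And>t. t \<in> T \<Longrightarrow> ereal_convex (ft t) \<and> proper_fun (ft t)"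
    and "h = (\<lambda>x. SUP t\<in>T. ft t x)"
    and "v1bar0 f h \<noteq> \<infinity> \<or> supD1 f h \<noteq> -\<infinity>"
  shows "((\<lambda>\<epsilon>::real. INF x\<in>{x. \<forall>t\<in>T. ft t x \<le> ereal \<epsilon>}. f x) \<longlongrightarrow> supD1 f h)
           (at_right 0)"
proof -
  let ?v = "v1 f h"
  obtain t0 where "t0 \<in> T" using assms(1) by fastforce
  then have h_finite_below: "h x \<noteq> -\<infinity>" for x
    using assms(4)[of t0] SUP_upper[of t0 T "\<lambda>t. ft t x"]
    unfolding assms(5) proper_fun_def by auto
  have conv: "ereal_convex ?v"
    using assms(2,4,5) by (auto intro!: ereal_convex_v1 ereal_convex_SUP)
  have objective: "(\<lambda>\<epsilon>. INF x\<in>{x. \<forall>t\<in>T. ft t x \<le> ereal \<epsilon>}. f x) = ?v"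
    unfolding v1_def assms(5) by (simp add: SUP_le_iff)
  have dual: "supD1 f h = dual_value ?v"
    unfolding supD1_def dual_value_def
    by (intro SUP_cong) (simp_all add: INF_edom_eq_INF_v1 h_finite_below)
  have "(SUP e\<in>{0<..}. ?v e) \<le> ?v 0"
    by (rule SUP_least) (auto intro: antimonoD[OF antimono_v1])
  then have "(SUP e\<in>{0<..}. ?v e) \<le> v1bar0 f h"
    unfolding v1bar0_def using SUP_at_right_le_Liminf_antimono[OF antimono_v1, of f h 0] by simp
  then have "(SUP e\<in>{0<..}. ?v e) \<noteq> \<infinity> \<or> dual_value ?v \<noteq> -\<infinity>"
    using assms(6) dual by auto
  then have "dual_value ?v = (SUP e\<in>{0<..}. ?v e)"
    by (rule dual_value_eq_SUP_at_right[OF conv antimono_v1])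
  then show ?thesis
    unfolding objective dual using tendsto_at_right_SUP_antimono[OF antimono_v1] by simp
qed

end
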